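(* Let $n\ge 1$ and $1\le m\le n$. Then the suffix length of $\mathcal{A}(n,m)$ with respect to lexicographic order satisfies $S(n,m) = 2\,|\mathcal{A}(n,m)| - 1$.
   Context: An ascending composition of a positive integer $n$ is a finite sequence of positive integers $(a_1,\dots,a_k)$, $k\ge1$, with $a_1+\dots+a_k=n$ and $a_1\le\dots\le a_k$. For $1\le m\le n$, $\mathcal{A}(n,m)$ is the set of ascending compositions of $n$ with $a_1\ge m$. List the elements of $\mathcal{A}(n,m)$ in increasing lexicographic order as $b^{(1)},\dots,b^{(N)}$. The suffix length $S(n,m)$ is defined as the number of parts of $b^{(1)}$ plus, for each $i=1,\dots,N-1$, the number of parts of $b^{(i+1)}$ lying beyond the longest common prefix of $b^{(i)}$ and $b^{(i+1)}$ (i.e. if the longest common prefix has length $j$ and $b^{(i+1)}$ has $k'$ parts, this contributes $k'-j$). Equivalently, it counts the number of part-writes needed to generate the list when each composition is obtained from the previous one by rewriting only the differing suffix. *)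

theory Defs
  imports Main
begin

definition asc_comps :: "nat \<Rightarrow> nat \<Rightarrow> nat list set" where
  "asc_comps n m = {xs. xs \<noteq> [] \<and> (\<forall>x\<in>set xs. 0 < x) \<and> sum_list xs = n
                        \<and> sorted xs \<and> m \<le> hd xs}"

definition lex_less :: "nat list \<Rightarrow> nat list \<Rightarrow> bool" where
  "lex_less xs ys \<longleftrightarrow> (xs, ys) \<in> lexord {(a, b). a < b}"

definition lex_listing :: "nat \<Rightarrow> nat \<Rightarrow> nat list list" where
  "lex_listing n m = (THE bs. set bs = asc_comps n m \<and> sorted_wrt lex_less bs)"

fun lcp_len :: "nat list \<Rightarrow> nat list \<Rightarrow> nat" where
  "lcp_len (x # xs) (y # ys) = (if x = y then Suc (lcp_len xs ys) else 0)"
| "lcp_len _ _ = 0"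

definition suffix_length :: "nat list list \<Rightarrow> nat" where
  "suffix_length bs = length (bs ! 0) +
     (\<Sum>i<length bs - 1. length (bs ! (i+1)) - lcp_len (bs ! i) (bs ! (i+1)))"

definition S :: "nat \<Rightarrow> nat \<Rightarrow> nat" where
  "S n m = suffix_length (lex_listing n m)"

end

theory Submission
  imports Defs
begin

(*
  The ascending compositions of n with first part at least m are
  generated by the recursion
      asc_list n m = [a # c. a <- [m..n div 2], c <- asc_list (n - a) a] @ [[n]],
  i.e. grouped by the first part a (a composition with first part a and at
  least two parts has its remaining parts in A(n-a, a), which forces 2a <= n),
  followed by the one-part composition [n].  This list contains exactly the
  elements of A(n,m) and is strictly increasing lexicographically; since a list
  sorted by an asymmetric relation is determined by its set, it is the
  lexicographic listing of A(n,m).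

  For the cost we count part-writes starting from a given previous composition.
  Every block of the recursion starts with a new first part, so it costs one
  write for that part plus the cost of the sub-listing; the final [n] costs one
  write.  By induction on n each listing of length L costs 2L - 1, so every
  block costs 2 * (its length) and the whole list 2 * |A(n,m)| - 1.
*)

lemma sorted_wrt_asym_unique:
  assumes "asymp R" "sorted_wrt R xs" "sorted_wrt R ys" "set xs = set ys"
  shows "xs = ys"
  using assms(2-4)
proof (induction xs arbitrary: ys)
  case Nil
  then show ?case by simp
next
  case (Cons x xs)
  then obtain y ys' where ys: "ys = y # ys'" by (cases ys) auto
  have heads: "x = y"
  proof (rule ccontr)
    assume "x \<noteq> y"
    then have "x \<in> set ys'" and "y \<in> set xs"
      using Cons.prems(3) ys by (auto simp: set_eq_iff)
    then have "R y x" and "R x y"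
      using Cons.prems(1,2) ys by simp_all
    then show False using \<open>asymp R\<close> by (blast dest: asympD)
  qed
  have irrefl: "\<not> R z z" for z using \<open>asymp R\<close> by (blast dest: asympD)
  have "x \<notin> set xs" "y \<notin> set ys'" using Cons.prems(1,2) ys irrefl by auto
  then have "set xs = set ys'" using Cons.prems(3) ys heads by auto
  then show ?case using Cons ys heads by simp
qed

lemma sorted_wrt_irrefl_distinct:
  "(\<And>x. \<not> R x x) \<Longrightarrow> sorted_wrt R xs \<Longrightarrow> distinct xs"
  by (induction xs) auto

lemma asymp_lex_less: "asymp lex_less"
proof (rule asympI)
  have "asym {(a::nat, b). a < b}" by (auto intro: asymI)
  then show "\<not> lex_less ys xs" if "lex_less xs ys" for xs ys
    using that unfolding lex_less_def by (rule lexord_asymmetric)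
qed

lemma lex_listing_eqI:
  assumes "set bs = asc_comps n m" "sorted_wrt lex_less bs"
  shows "lex_listing n m = bs"
  unfolding lex_listing_def
proof (rule the_equality)
  show "set bs = asc_comps n m \<and> sorted_wrt lex_less bs" using assms ..
  show "cs = bs" if "set cs = asc_comps n m \<and> sorted_wrt lex_less cs" for cs
    using that assms by (intro sorted_wrt_asym_unique[OF asymp_lex_less]) auto
qed

text \<open>Compositions grouped by their first part a (with m \<le> a and 2a \<le> n), then [n].
  The lower bound max m 1 makes the recursion well-founded for every m.\<close>
function asc_list :: "nat \<Rightarrow> nat \<Rightarrow> nat list list" where
  "asc_list n m = (if n = 0 then [] else
     concat (map (\<lambda>a. map ((#) a) (asc_list (n - a) a)) [max m 1..<Suc (n div 2)]) @ [[n]])"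
  by pat_completeness auto
termination by (relation "measure fst") auto

declare asc_list.simps[simp del]

lemma asc_list_unfold: "n \<noteq> 0 \<Longrightarrow> asc_list n m =
  concat (map (\<lambda>a. map ((#) a) (asc_list (n - a) a)) [max m 1..<Suc (n div 2)]) @ [[n]]"
  by (subst asc_list.simps) simp

lemma asc_list_nonempty: "n \<noteq> 0 \<Longrightarrow> asc_list n m \<noteq> []"
  by (simp add: asc_list_unfold)

lemma mem_asc_list:
  "xs \<in> set (asc_list n m) \<longleftrightarrow> n \<noteq> 0 \<and> (xs = [n] \<or>
     (\<exists>a ys. xs = a # ys \<and> max m 1 \<le> a \<and> 2 * a \<le> n \<and> ys \<in> set (asc_list (n - a) a)))"
proof (cases "n = 0")
  case True
  then show ?thesis by (simp add: asc_list.simps)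
next
  case False
  then show ?thesis by (subst asc_list_unfold) auto
qed

lemma cons_in_asc_comps:
  assumes "ys \<noteq> []" "1 \<le> m"
  shows "a # ys \<in> asc_comps n m \<longleftrightarrow>
         m \<le> a \<and> 2 * a \<le> n \<and> ys \<in> asc_comps (n - a) a"
proof
  assume xs: "a # ys \<in> asc_comps n m"
  have le: "\<forall>y\<in>set ys. a \<le> y" using xs by (auto simp: asc_comps_def)
  have "hd ys \<in> set ys" using assms(1) by simp
  then have "a \<le> sum_list ys"
    using le member_le_sum_list[of "hd ys" ys] by auto
  then show "m \<le> a \<and> 2 * a \<le> n \<and> ys \<in> asc_comps (n - a) a"
    using xs assms le by (auto simp: asc_comps_def)
next
  assume a: "m \<le> a \<and> 2 * a \<le> n \<and> ys \<in> asc_comps (n - a) a"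
  have "hd ys \<le> y" if "y \<in> set ys" for y
    using a that by (cases ys) (auto simp: asc_comps_def)
  then have "\<forall>y\<in>set ys. a \<le> y"
    using a by (auto simp: asc_comps_def intro: order_trans)
  then show "a # ys \<in> asc_comps n m"
    using a assms by (auto simp: asc_comps_def)
qed

lemma set_asc_list: "1 \<le> m \<Longrightarrow> m \<le> n \<Longrightarrow> set (asc_list n m) = asc_comps n m"
proof (induction n arbitrary: m rule: less_induct)
  case (less n)
  have "xs \<in> set (asc_list n m) \<longleftrightarrow> xs \<in> asc_comps n m" for xs
  proof (cases "tl xs = []")
    case True
    then consider "xs = []" | x where "xs = [x]" by (cases xs) auto
    then show ?thesis
      using less.prems
      by cases (auto simp: mem_asc_list[of "[]"] mem_asc_list[of "[x]" for x] asc_comps_def)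
  next
    case False
    then obtain a ys where xs: "xs = a # ys" and ys: "ys \<noteq> []" by (cases xs) auto
    have "xs \<in> set (asc_list n m) \<longleftrightarrow> m \<le> a \<and> 2 * a \<le> n \<and> ys \<in> set (asc_list (n - a) a)"
      using xs ys less.prems by (auto simp: mem_asc_list[of "a # ys"])
    also have "\<dots> \<longleftrightarrow> m \<le> a \<and> 2 * a \<le> n \<and> ys \<in> asc_comps (n - a) a"
      using less.prems by (auto simp: less.IH)
    also have "\<dots> \<longleftrightarrow> xs \<in> asc_comps n m"
      using xs ys less.prems cons_in_asc_comps by simp
    finally show ?thesis .
  qed
  then show ?case by blast
qed

lemma sorted_blocks:
  assumes "sorted_wrt (<) as" "\<forall>a\<in>set as. a < n" "\<forall>a\<in>set as. sorted_wrt lex_less (g a)"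
  shows "sorted_wrt lex_less (concat (map (\<lambda>a. map ((#) a) (g a)) as) @ [[n]])"
  using assms
proof (induction as)
  case Nil
  then show ?case by simp
next
  case (Cons a as)
  have "sorted_wrt lex_less (map ((#) a) (g a))"
    using Cons.prems(3) by (simp add: sorted_wrt_map lex_less_def)
  moreover have "lex_less (a # x) (b # y)" if "a < b" for b x y
    using that by (simp add: lex_less_def)
  ultimately show ?case using Cons by (auto simp: sorted_wrt_append)
qed

lemma sorted_asc_list: "sorted_wrt lex_less (asc_list n m)"
proof (induction n arbitrary: m rule: less_induct)
  case (less n)
  show ?case
  proof (cases "n = 0")
    case True
    then show ?thesis by (simp add: asc_list.simps)
  next
    case False
    show ?thesis unfolding asc_list_unfold[OF False]
      by (rule sorted_blocks) (use less False in \<open>auto simp del: upt_Suc\<close>)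
  qed
qed

lemma lex_listing_asc_list:
  "1 \<le> m \<Longrightarrow> m \<le> n \<Longrightarrow> lex_listing n m = asc_list n m"
  by (intro lex_listing_eqI set_asc_list sorted_asc_list)

text \<open>Number of part-writes needed to produce the compositions bs one after
  another when the previously written composition is p.\<close>
fun writes :: "nat list \<Rightarrow> nat list list \<Rightarrow> nat" where
  "writes p [] = 0"
| "writes p (b # bs) = (length b - lcp_len p b) + writes b bs"

lemma writes_sum:
  "(\<Sum>i<length bs. length ((b # bs) ! (i+1)) - lcp_len ((b # bs) ! i) ((b # bs) ! (i+1)))
     = writes b bs"
proof (induction bs arbitrary: b)
  case Nil
  then show ?case by simp
next
  case (Cons c cs)
  show ?case
    using Cons[of c] by (simp add: sum.lessThan_Suc_shift del: sum.lessThan_Suc)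
qed

lemma suffix_length_writes: "suffix_length (b # bs) = writes [] (b # bs)"
  using writes_sum[of b bs] by (simp add: suffix_length_def)

lemma writes_append: "writes p (xs @ ys) = writes p xs + writes (last (p # xs)) ys"
  by (induction xs arbitrary: p) auto

lemma writes_map_cons: "writes (a # p) (map ((#) a) bs) = writes p bs"
  by (induction bs arbitrary: p) auto

lemma writes_block:
  assumes "bs \<noteq> []" "p = [] \<or> hd p \<noteq> a"
  shows "writes p (map ((#) a) bs) = 1 + writes [] bs"
proof -
  obtain b rest where bs: "bs = b # rest" using assms(1) by (cases bs) auto
  have "lcp_len p (a # b) = 0" using assms(2) by (cases p) auto
  then show ?thesis using bs writes_map_cons[of a b rest] by simp
qed

lemma writes_blocks:
  assumes "distinct as" "\<forall>a\<in>set as. g a \<noteq> [] \<and> a \<noteq> n"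
    "p = [] \<or> (hd p \<notin> set as \<and> hd p \<noteq> n)"
  shows "writes p (concat (map (\<lambda>a. map ((#) a) (g a)) as) @ [[n]])
       = (\<Sum>a\<leftarrow>as. 1 + writes [] (g a)) + 1"
  using assms
proof (induction as arbitrary: p)
  case Nil
  have "lcp_len p [n] = 0" using Nil.prems(3) by (cases p) auto
  then show ?case by simp
next
  case (Cons a as)
  let ?B = "map ((#) a) (g a)"
  have "g a \<noteq> []" "p = [] \<or> hd p \<noteq> a" using Cons.prems by auto
  then have first: "writes p ?B = 1 + writes [] (g a)" by (rule writes_block)
  have "last (p # ?B) = a # last (g a)" using \<open>g a \<noteq> []\<close> by (simp add: last_map)
  then have rest: "writes (last (p # ?B)) (concat (map (\<lambda>a. map ((#) a) (g a)) as) @ [[n]])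
       = (\<Sum>a\<leftarrow>as. 1 + writes [] (g a)) + 1"
    using Cons.prems by (intro Cons.IH) auto
  show ?case using first rest by (simp add: writes_append)
qed

lemma writes_asc_list: "n \<noteq> 0 \<Longrightarrow> writes [] (asc_list n m) = 2 * length (asc_list n m) - 1"
proof (induction n arbitrary: m rule: less_induct)
  case (less n)
  define as where "as = [max m 1..<Suc (n div 2)]"
  define g where "g = (\<lambda>a. asc_list (n - a) a)"
  have unfold: "asc_list n m = concat (map (\<lambda>a. map ((#) a) (g a)) as) @ [[n]]"
    using less.prems by (simp add: asc_list_unfold as_def g_def)
  have as_range: "1 \<le> a \<and> 2 * a \<le> n" if "a \<in> set as" for a
    using that unfolding as_def by auto
  have block: "1 + writes [] (g a) = 2 * length (g a)" if "a \<in> set as" for a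
  proof -
    have "n - a < n" "n - a \<noteq> 0" using as_range[OF that] by auto
    have "g a \<noteq> []"
      unfolding g_def using \<open>n - a \<noteq> 0\<close> by (rule asc_list_nonempty)
    moreover have "writes [] (g a) = 2 * length (g a) - 1"
      unfolding g_def using \<open>n - a < n\<close> \<open>n - a \<noteq> 0\<close> by (rule less.IH)
    ultimately show ?thesis by (cases "g a") auto
  qed
  have "writes [] (asc_list n m) = (\<Sum>a\<leftarrow>as. 1 + writes [] (g a)) + 1"
    unfolding unfold
    using as_range less.prems by (intro writes_blocks) (auto simp: as_def g_def asc_list_nonempty)
  also have "(\<Sum>a\<leftarrow>as. 1 + writes [] (g a)) = 2 * (\<Sum>a\<leftarrow>as. length (g a))"
    using block by (simp add: sum_list_const_mult cong: map_cong)
  finally show ?case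
    unfolding unfold by (simp add: length_concat comp_def)
qed

theorem theorem1:
  fixes n m :: nat
  assumes "1 \<le> n" and "1 \<le> m" and "m \<le> n"
  shows "S n m = 2 * card (asc_comps n m) - 1"
proof -
  have listing: "lex_listing n m = asc_list n m"
    using assms(2,3) by (rule lex_listing_asc_list)
  have "distinct (asc_list n m)"
    using asymp_lex_less sorted_asc_list
    by (intro sorted_wrt_irrefl_distinct[of lex_less]) (auto dest: asympD)
  then have "card (asc_comps n m) = length (asc_list n m)"
    using set_asc_list[OF assms(2,3)] by (metis distinct_card)
  moreover obtain b bs where "asc_list n m = b # bs"
    using asc_list_nonempty[of n m] assms by (cases "asc_list n m") auto
  then have "S n m = writes [] (asc_list n m)"
    by (simp add: S_def listing suffix_length_writes)
  ultimately show ?thesis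
    using writes_asc_list[of n m] assms by simp
qed

end
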